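(* Let $\alpha,\beta$ be real constants with $\alpha\beta^2-4\alpha^2\neq 0$, and let $\Omega\subseteq\mathbb{R}^2$ be a domain. Let $A,B,E,F,G:\Omega\to\mathbb{C}(\alpha,\beta)$ be continuously differentiable functions and let $C,D:\Omega\to\mathbb{C}(\alpha,\beta)$ be arbitrary functions. Define the operator $$\mathbf{L}w := A\,\partial_z w + B\,\overline{\partial_z w} + C\,\partial_{\bar z} w + D\,\overline{\partial_{\bar z} w} + E\,w + F\,\overline{w} + G,$$ acting on twice continuously differentiable functions $w:\Omega\to\mathbb{C}(\alpha,\beta)$ (all products taken in $\mathbb{C}(\alpha,\beta)$). Then $\mathbf{L}$ is associated to the Cauchy–Riemann operator $\partial_{\bar z}$ (i.e. $\partial_{\bar z}w=0$ implies $\partial_{\bar z}(\mathbf{L}w)=0$) if and only if $B\equiv 0$, $F\equiv 0$, and $A$, $E$, $G$ are holomorphic in $\Omega$ (i.e. $\partial_{\bar z}A=\partial_{\bar z}E=\partial_{\bar z}G=0$).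
   Context: For real parameters $\alpha,\beta$, $\mathbb{C}(\alpha,\beta)$ denotes the real algebra of numbers $z=x+iy$ ($x,y\in\mathbb{R}$) with $i^2=-\alpha-\beta i$ (structure polynomial $X^2+\beta X+\alpha$); thus $(x_1+iy_1)(x_2+iy_2)=(x_1x_2-\alpha y_1y_2)+i(x_1y_2+x_2y_1-\beta y_1y_2)$, which is commutative and associative. Conjugation is $\overline{x+iy}=x-iy$. For a differentiable function $w=u+iv$ of $(x,y)$ with real $u,v$, the Cauchy–Riemann operator is $\partial_{\bar z}=\tfrac12(\partial_x+i\partial_y)$ and its conjugate is $\partial_z=\tfrac12(\partial_x-i\partial_y)$ (multiplication by $i$ in $\mathbb{C}(\alpha,\beta)$). A function $w$ is holomorphic if $\partial_{\bar z}w=0$, equivalently $\partial_xu-\alpha\partial_yv=0$ and $\partial_yu+\partial_xv-\beta\partial_yv=0$. Two differential operators $\mathbf{L},\mathbf{G}$ are called associated if $\mathbf{G}w=0$ implies $\mathbf{G}(\mathbf{L}w)=0$. *)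

theory Defs
  imports "HOL-Analysis.Analysis"
begin

text \<open>Elements of the algebra C(alpha,beta) are represented as pairs (x,y) meaning x + i y.
Points of the plane are pairs of reals as well.\<close>

type_synonym cab = "real \<times> real"

definition cmul :: "real \<Rightarrow> real \<Rightarrow> cab \<Rightarrow> cab \<Rightarrow> cab" where
  "cmul \<alpha> \<beta> z w = (fst z * fst w - \<alpha> * snd z * snd w,
                     fst z * snd w + fst w * snd z - \<beta> * snd z * snd w)"

definition cconj :: "cab \<Rightarrow> cab" where
  "cconj z = (fst z, - snd z)"

definition iunit :: cab where
  "iunit = (0, 1)"

definition px :: "(real \<times> real \<Rightarrow> cab) \<Rightarrow> real \<times> real \<Rightarrow> cab" where
  "px f p = frechet_derivative f (at p) (1, 0)"

definition py :: "(real \<times> real \<Rightarrow> cab) \<Rightarrow> real \<times> real \<Rightarrow> cab" where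
  "py f p = frechet_derivative f (at p) (0, 1)"

definition C1_on :: "(real \<times> real) set \<Rightarrow> (real \<times> real \<Rightarrow> cab) \<Rightarrow> bool" where
  "C1_on \<Omega> f \<longleftrightarrow> (\<forall>p\<in>\<Omega>. f differentiable (at p))
      \<and> continuous_on \<Omega> (px f) \<and> continuous_on \<Omega> (py f)"

definition C2_on :: "(real \<times> real) set \<Rightarrow> (real \<times> real \<Rightarrow> cab) \<Rightarrow> bool" where
  "C2_on \<Omega> f \<longleftrightarrow> C1_on \<Omega> f \<and> C1_on \<Omega> (px f) \<and> C1_on \<Omega> (py f)"

definition dzbar :: "real \<Rightarrow> real \<Rightarrow> (real \<times> real \<Rightarrow> cab) \<Rightarrow> real \<times> real \<Rightarrow> cab" where
  "dzbar \<alpha> \<beta> f p = (1/2) *\<^sub>R (px f p + cmul \<alpha> \<beta> iunit (py f p))"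

definition dz :: "real \<Rightarrow> real \<Rightarrow> (real \<times> real \<Rightarrow> cab) \<Rightarrow> real \<times> real \<Rightarrow> cab" where
  "dz \<alpha> \<beta> f p = (1/2) *\<^sub>R (px f p - cmul \<alpha> \<beta> iunit (py f p))"

definition holomorphic_ab_on :: "real \<Rightarrow> real \<Rightarrow> (real \<times> real) set \<Rightarrow> (real \<times> real \<Rightarrow> cab) \<Rightarrow> bool" where
  "holomorphic_ab_on \<alpha> \<beta> \<Omega> f \<longleftrightarrow> (\<forall>p\<in>\<Omega>. dzbar \<alpha> \<beta> f p = 0)"

definition Lop :: "real \<Rightarrow> real \<Rightarrow> (real \<times> real \<Rightarrow> cab) \<Rightarrow> (real \<times> real \<Rightarrow> cab) \<Rightarrow>
   (real \<times> real \<Rightarrow> cab) \<Rightarrow> (real \<times> real \<Rightarrow> cab) \<Rightarrow> (real \<times> real \<Rightarrow> cab) \<Rightarrow>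
   (real \<times> real \<Rightarrow> cab) \<Rightarrow> (real \<times> real \<Rightarrow> cab) \<Rightarrow> (real \<times> real \<Rightarrow> cab) \<Rightarrow> real \<times> real \<Rightarrow> cab" where
  "Lop \<alpha> \<beta> A B C D E F G w = (\<lambda>p.
      cmul \<alpha> \<beta> (A p) (dz \<alpha> \<beta> w p) + cmul \<alpha> \<beta> (B p) (cconj (dz \<alpha> \<beta> w p))
    + cmul \<alpha> \<beta> (C p) (dzbar \<alpha> \<beta> w p) + cmul \<alpha> \<beta> (D p) (cconj (dzbar \<alpha> \<beta> w p))
    + cmul \<alpha> \<beta> (E p) (w p) + cmul \<alpha> \<beta> (F p) (cconj (w p)) + G p)"

definition associated_CR :: "real \<Rightarrow> real \<Rightarrow> (real \<times> real) set \<Rightarrow>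
   ((real \<times> real \<Rightarrow> cab) \<Rightarrow> real \<times> real \<Rightarrow> cab) \<Rightarrow> bool" where
  "associated_CR \<alpha> \<beta> \<Omega> L \<longleftrightarrow> (\<forall>w. C2_on \<Omega> w \<longrightarrow>
      holomorphic_ab_on \<alpha> \<beta> \<Omega> w \<longrightarrow> holomorphic_ab_on \<alpha> \<beta> \<Omega> (L w))"

end

theory Submission
  imports Defs
begin

text \<open>For a holomorphic \<open>w\<close> of class \<open>C\<^sup>2\<close> the terms of \<open>L w\<close> containing \<open>C\<close> and \<open>D\<close>
  vanish on the domain, and by the symmetry of second derivatives
  \<open>dzbar (dz w) = dz (dzbar w) = 0\<close>. The product rule therefore expresses \<open>dzbar (L w)\<close>
  through \<open>w\<close>, \<open>B\<close>, \<open>F\<close> and the Cauchy-Riemann derivatives of \<open>A, B, E, F, G\<close> alone, and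
  it vanishes when \<open>B = F = 0\<close> and \<open>A, E, G\<close> are holomorphic. Conversely, the holomorphic
  test functions \<open>0, 1, i, \<zeta>, i\<zeta>, \<zeta>\<^sup>2\<close> with \<open>\<zeta> = y - ix\<close> give linear equations at
  every point. They force \<open>E, F, G\<close> to be holomorphic and \<open>B = 0\<close>, and then
  \<open>F = dzbar A\<close> and \<open>(2\<alpha> + \<beta>i) dzbar A = 0\<close>. As \<open>2\<alpha> + \<beta>i\<close> has norm
  \<open>4\<alpha>\<^sup>2 - \<alpha>\<beta>\<^sup>2 \<noteq> 0\<close>, it is not a zero divisor.\<close>

section \<open>Symmetry of mixed partial derivatives\<close>

lemma has_real_derivative_partial_x:
  fixes f :: "real \<times> real \<Rightarrow> real"
  assumes "(f has_derivative (\<lambda>k. fst k * fx + snd k * fy)) (at (s, t))"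
  shows "((\<lambda>s. f (s, t)) has_real_derivative fx) (at s)"
proof -
  have "((\<lambda>s. (s, t)) has_derivative (\<lambda>k. (k, 0))) (at s)"
    by (auto intro!: derivative_eq_intros)
  from has_derivative_compose[OF this assms] show ?thesis
    by (simp add: has_field_derivative_def mult.commute[of _ fx])
qed

lemma has_real_derivative_partial_y:
  fixes f :: "real \<times> real \<Rightarrow> real"
  assumes "(f has_derivative (\<lambda>k. fst k * fx + snd k * fy)) (at (s, t))"
  shows "((\<lambda>t. f (s, t)) has_real_derivative fy) (at t)"
proof -
  have "((\<lambda>t. (s, t)) has_derivative (\<lambda>k. (0, k))) (at t)"
    by (auto intro!: derivative_eq_intros)
  from has_derivative_compose[OF this assms] show ?thesis
    by (simp add: has_field_derivative_def mult.commute[of _ fy])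
qed

lemma second_difference_mean_value:
  fixes f fx fxy :: "real \<Rightarrow> real \<Rightarrow> real"
  assumes "h > 0"
    and fx: "\<And>s t. s \<in> {a..a+h} \<Longrightarrow> t \<in> {b..b+h} \<Longrightarrow> ((\<lambda>s. f s t) has_real_derivative fx s t) (at s)"
    and fxy: "\<And>s t. s \<in> {a..a+h} \<Longrightarrow> t \<in> {b..b+h} \<Longrightarrow> ((\<lambda>t. fx s t) has_real_derivative fxy s t) (at t)"
  obtains \<xi> \<eta> where "\<xi> \<in> {a<..<a+h}" "\<eta> \<in> {b<..<b+h}"
    "f (a+h) (b+h) - f (a+h) b - f a (b+h) + f a b = h * h * fxy \<xi> \<eta>"
proof -
  obtain \<xi> where \<xi>: "a < \<xi>" "\<xi> < a+h"
    "(f (a+h) (b+h) - f (a+h) b) - (f a (b+h) - f a b) = h * (fx \<xi> (b+h) - fx \<xi> b)"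
    using MVT2[of a "a+h" "\<lambda>s. f s (b+h) - f s b" "\<lambda>s. fx s (b+h) - fx s b"] \<open>h > 0\<close>
      DERIV_diff[OF fx fx] by auto
  obtain \<eta> where \<eta>: "b < \<eta>" "\<eta> < b+h" "fx \<xi> (b+h) - fx \<xi> b = h * fxy \<xi> \<eta>"
    using MVT2[of b "b+h" "fx \<xi>" "fxy \<xi>"] \<open>h > 0\<close> \<xi>(1,2) fxy by auto
  show thesis
    by (rule that[of \<xi> \<eta>]) (use \<xi> \<eta> in auto)
qed

lemma eq_if_values_meet_arbitrarily_close:
  fixes f g :: "'a::metric_space \<Rightarrow> 'b::metric_space"
  assumes "isCont f z" "isCont g z"
    and meet: "\<And>e. e > 0 \<Longrightarrow> \<exists>u v. dist u z < e \<and> dist v z < e \<and> f u = g v"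
  shows "f z = g z"
proof (rule ccontr)
  assume "f z \<noteq> g z"
  define d where "d = dist (f z) (g z) / 2"
  have "d > 0" using \<open>f z \<noteq> g z\<close> by (simp add: d_def)
  obtain e1 where "e1 > 0" and e1: "\<And>u. dist u z < e1 \<Longrightarrow> dist (f u) (f z) < d"
    using assms(1) \<open>d > 0\<close> unfolding continuous_at_eps_delta by blast
  obtain e2 where "e2 > 0" and e2: "\<And>v. dist v z < e2 \<Longrightarrow> dist (g v) (g z) < d"
    using assms(2) \<open>d > 0\<close> unfolding continuous_at_eps_delta by blast
  obtain u v where "dist u z < min e1 e2" "dist v z < min e1 e2" "f u = g v"
    using meet[of "min e1 e2"] \<open>e1 > 0\<close> \<open>e2 > 0\<close> by auto
  then have "dist (f z) (g z) \<le> dist (f u) (f z) + dist (g v) (g z)"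
    using dist_triangle[of "f z" "g z" "g v"] by (simp add: dist_commute)
  also have "\<dots> < d + d"
    using e1 e2 \<open>dist u z < min e1 e2\<close> \<open>dist v z < min e1 e2\<close> by (intro add_strict_mono) auto
  finally show False by (simp add: d_def)
qed

lemma mixed_partials_eq:
  fixes f fx fy fxx fxy fyx fyy :: "real \<times> real \<Rightarrow> real"
  assumes "open S" "z \<in> S"
    and f: "\<And>q. q \<in> S \<Longrightarrow> (f has_derivative (\<lambda>k. fst k * fx q + snd k * fy q)) (at q)"
    and fx: "\<And>q. q \<in> S \<Longrightarrow> (fx has_derivative (\<lambda>k. fst k * fxx q + snd k * fxy q)) (at q)"
    and fy: "\<And>q. q \<in> S \<Longrightarrow> (fy has_derivative (\<lambda>k. fst k * fyx q + snd k * fyy q)) (at q)"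
    and "continuous_on S fxy" "continuous_on S fyx"
  shows "fxy z = fyx z"
proof (rule eq_if_values_meet_arbitrarily_close[where f = fxy and g = fyx])
  show "isCont fxy z"
    using assms continuous_on_eq_continuous_at by blast
  show "isCont fyx z"
    using assms continuous_on_eq_continuous_at by blast
  fix e :: real assume "e > 0"
  obtain a b where z: "z = (a, b)" by fastforce
  obtain r where "r > 0" "ball z r \<subseteq> S"
    using assms(1,2) open_contains_ball by blast
  define h where "h = min e r / 3"
  have "h > 0" using \<open>e > 0\<close> \<open>r > 0\<close> by (simp add: h_def)
  have near: "dist (s, t) z < min e r" if "s \<in> {a..a+h}" "t \<in> {b..b+h}" for s t
  proof -
    have "dist (s, t) z \<le> \<bar>s - a\<bar> + \<bar>t - b\<bar>"
      using sqrt_sum_squares_le_sum_abs by (simp add: z dist_Pair_Pair dist_real_def)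
    also have "\<dots> < 3 * h" using that \<open>h > 0\<close> by auto
    finally show ?thesis by (simp add: h_def)
  qed
  then have inS: "(s, t) \<in> S" if "s \<in> {a..a+h}" "t \<in> {b..b+h}" for s t
    using that \<open>ball z r \<subseteq> S\<close> by (force simp: dist_commute)
  obtain \<xi> \<eta> where \<xi>\<eta>: "\<xi> \<in> {a<..<a+h}" "\<eta> \<in> {b<..<b+h}"
    "f (a+h, b+h) - f (a+h, b) - f (a, b+h) + f (a, b) = h * h * fxy (\<xi>, \<eta>)"
    by (rule second_difference_mean_value[of h a b "\<lambda>s t. f (s, t)" "\<lambda>s t. fx (s, t)"])
      (use \<open>h > 0\<close> inS in \<open>auto intro: has_real_derivative_partial_x[OF f] has_real_derivative_partial_y[OF fx]\<close>)
  obtain \<eta>' \<xi>' where \<eta>'\<xi>': "\<eta>' \<in> {b<..<b+h}" "\<xi>' \<in> {a<..<a+h}"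
    "f (a+h, b+h) - f (a, b+h) - f (a+h, b) + f (a, b) = h * h * fyx (\<xi>', \<eta>')"
    by (rule second_difference_mean_value[of h b a "\<lambda>t s. f (s, t)" "\<lambda>t s. fy (s, t)"])
      (use \<open>h > 0\<close> inS in \<open>auto intro: has_real_derivative_partial_y[OF f] has_real_derivative_partial_x[OF fy]\<close>)
  have "h * h * fxy (\<xi>, \<eta>) = h * h * fyx (\<xi>', \<eta>')"
    using \<xi>\<eta>(3) \<eta>'\<xi>'(3) by linarith
  then have "fxy (\<xi>, \<eta>) = fyx (\<xi>', \<eta>')"
    using \<open>h > 0\<close> by simp
  moreover have "dist (\<xi>, \<eta>) z < e" "dist (\<xi>', \<eta>') z < e"
    using near \<xi>\<eta>(1,2) \<eta>'\<xi>'(1,2) by fastforce+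
  ultimately show "\<exists>u v. dist u z < e \<and> dist v z < e \<and> fxy u = fyx v" by blast
qed

lemma cmul_add_right: "cmul a b z (x + y) = cmul a b z x + cmul a b z y"
  by (simp add: cmul_def algebra_simps)

lemma cmul_scaleR_right: "cmul a b z (r *\<^sub>R x) = r *\<^sub>R cmul a b z x"
  by (simp add: cmul_def algebra_simps)

lemma cmul_zero [simp]: "cmul a b 0 z = 0" "cmul a b z 0 = 0"
  by (simp_all add: cmul_def zero_prod_def)

lemma cconj_zero [simp]: "cconj 0 = 0"
  by (simp add: cconj_def zero_prod_def)

lemma cconj_Pair [simp]: "cconj (x, y) = (x, - y)"
  by (simp add: cconj_def)

text \<open>\<open>cnorm a b w\<close> is the product of \<open>w = x + iy\<close> with its algebraic conjugate
  \<open>(x - b y) - iy\<close>, obtained from the other root \<open>-b - i\<close> of \<open>X\<^sup>2 + b X + a\<close>.\<close>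

definition cnorm :: "real \<Rightarrow> real \<Rightarrow> cab \<Rightarrow> real" where
  "cnorm a b w = (fst w)\<^sup>2 - b * fst w * snd w + a * (snd w)\<^sup>2"

lemma cmul_eq_0_iff_left:
  assumes "cnorm a b w \<noteq> 0"
  shows "cmul a b z w = 0 \<longleftrightarrow> z = 0"
proof
  assume "cmul a b z w = 0"
  moreover have "cmul a b (cmul a b z w) (fst w - b * snd w, - snd w) = cnorm a b w *\<^sub>R z"
    by (simp add: cmul_def cnorm_def prod_eq_iff algebra_simps power2_eq_square)
  ultimately show "z = 0"
    using assms by simp
qed simp

lemma has_derivative_cmul:
  assumes "(f has_derivative f') (at p)" "(g has_derivative g') (at p)"
  shows "((\<lambda>q. cmul a b (f q) (g q)) has_derivative
           (\<lambda>h. cmul a b (f p) (g' h) + cmul a b (f' h) (g p))) (at p)"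
proof -
  note f = has_derivative_fst[OF assms(1)] has_derivative_snd[OF assms(1)]
  note g = has_derivative_fst[OF assms(2)] has_derivative_snd[OF assms(2)]
  show ?thesis
    unfolding cmul_def
    by (rule has_derivative_eq_rhs, rule has_derivative_Pair, (rule f g derivative_eq_intros refl)+)
      (simp add: fun_eq_iff algebra_simps)
qed

lemma has_derivative_cconj:
  assumes "(f has_derivative f') (at p)"
  shows "((\<lambda>q. cconj (f q)) has_derivative (\<lambda>h. cconj (f' h))) (at p)"
  unfolding cconj_def
  by (intro has_derivative_Pair has_derivative_fst has_derivative_snd has_derivative_minus assms)

lemma differentiable_cmul:
  "f differentiable (at p) \<Longrightarrow> g differentiable (at p) \<Longrightarrow>
    (\<lambda>q. cmul a b (f q) (g q)) differentiable (at p)"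
  using has_derivative_cmul unfolding differentiable_def by blast

lemma differentiable_cconj:
  "f differentiable (at p) \<Longrightarrow> (\<lambda>q. cconj (f q)) differentiable (at p)"
  using has_derivative_cconj unfolding differentiable_def by blast

lemma px_py_has_derivative:
  assumes "(f has_derivative f') (at p)"
  shows "px f p = f' (1, 0)" "py f p = f' (0, 1)"
  using frechet_derivative_at[OF assms] by (simp_all add: px_def py_def)

lemma dzbar_has_derivative:
  "(f has_derivative f') (at p) \<Longrightarrow> dzbar a b f p = (1/2) *\<^sub>R (f' (1, 0) + cmul a b iunit (f' (0, 1)))"
  by (simp add: dzbar_def px_py_has_derivative)

lemma dz_has_derivative:
  "(f has_derivative f') (at p) \<Longrightarrow> dz a b f p = (1/2) *\<^sub>R (f' (1, 0) - cmul a b iunit (f' (0, 1)))"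
  by (simp add: dz_def px_py_has_derivative)

lemma dzbar_const [simp]: "dzbar a b (\<lambda>q. c) p = 0"
  by (simp add: dzbar_has_derivative[of _ "\<lambda>h. 0"])

lemma dz_const [simp]: "dz a b (\<lambda>q. c) p = 0"
  by (simp add: dz_has_derivative[of _ "\<lambda>h. 0"])

lemma px_const [simp]: "px (\<lambda>q. c) = (\<lambda>q. 0)"
  and py_const [simp]: "py (\<lambda>q. c) = (\<lambda>q. 0)"
  by (simp_all add: px_def py_def fun_eq_iff)

lemma C2_on_const: "C2_on S (\<lambda>q. c)"
  by (simp add: C2_on_def C1_on_def)

lemma frechet_derivative_cong_open:
  assumes "open S" "p \<in> S" "\<And>q. q \<in> S \<Longrightarrow> f q = g q"
  shows "frechet_derivative f (at p) = frechet_derivative g (at p)"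
proof -
  have "(f has_derivative f') (at p) \<longleftrightarrow> (g has_derivative f') (at p)" for f'
    using has_derivative_transform_within_open[of f f' p UNIV S g]
      has_derivative_transform_within_open[of g f' p UNIV S f] assms by auto
  then show ?thesis by (simp add: frechet_derivative_def)
qed

lemma dzbar_cong_open:
  "open S \<Longrightarrow> p \<in> S \<Longrightarrow> (\<And>q. q \<in> S \<Longrightarrow> f q = g q) \<Longrightarrow> dzbar a b f p = dzbar a b g p"
  by (simp add: dzbar_def px_def py_def frechet_derivative_cong_open[of S p f g])

lemma dz_cong_open:
  "open S \<Longrightarrow> p \<in> S \<Longrightarrow> (\<And>q. q \<in> S \<Longrightarrow> f q = g q) \<Longrightarrow> dz a b f p = dz a b g p"
  by (simp add: dz_def px_def py_def frechet_derivative_cong_open[of S p f g])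

lemma dzbar_eq_0_if_vanishes_on_open:
  "open S \<Longrightarrow> p \<in> S \<Longrightarrow> \<forall>q\<in>S. f q = 0 \<Longrightarrow> dzbar a b f p = 0"
  using dzbar_cong_open[of S p f "\<lambda>q. 0"] by simp

lemma dzbar_add:
  assumes "f differentiable (at p)" "g differentiable (at p)"
  shows "dzbar a b (\<lambda>q. f q + g q) p = dzbar a b f p + dzbar a b g p"
proof -
  obtain f' g' where f: "(f has_derivative f') (at p)" and g: "(g has_derivative g') (at p)"
    using assms unfolding differentiable_def by blast
  show ?thesis
    using dzbar_has_derivative[OF f] dzbar_has_derivative[OF g]
      dzbar_has_derivative[OF has_derivative_add[OF f g]]
    by (simp add: cmul_add_right algebra_simps)
qed

lemma dzbar_cmul:
  assumes "f differentiable (at p)" "g differentiable (at p)"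
  shows "dzbar a b (\<lambda>q. cmul a b (f q) (g q)) p =
           cmul a b (f p) (dzbar a b g p) + cmul a b (dzbar a b f p) (g p)"
proof -
  obtain f' g' where f: "(f has_derivative f') (at p)" and g: "(g has_derivative g') (at p)"
    using assms unfolding differentiable_def by blast
  show ?thesis
    unfolding dzbar_has_derivative[OF f] dzbar_has_derivative[OF g]
      dzbar_has_derivative[OF has_derivative_cmul[OF f g]]
    by (simp add: cmul_def iunit_def prod_eq_iff algebra_simps)
qed

lemma C1_on_has_derivative:
  assumes "C1_on S f" "q \<in> S"
  shows "(f has_derivative (\<lambda>k. fst k *\<^sub>R px f q + snd k *\<^sub>R py f q)) (at q)"
proof -
  define f' where "f' = frechet_derivative f (at q)"
  have "(f has_derivative f') (at q)"
    using assms by (simp add: C1_on_def f'_def frechet_derivative_works)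
  moreover have "f' = (\<lambda>k. fst k *\<^sub>R px f q + snd k *\<^sub>R py f q)"
  proof
    fix k
    have l: "linear f'"
      using assms by (simp add: C1_on_def f'_def linear_frechet_derivative)
    have "f' k = f' (fst k *\<^sub>R (1, 0) + snd k *\<^sub>R (0, 1))"
      by (cases k) simp
    also have "\<dots> = fst k *\<^sub>R f' (1, 0) + snd k *\<^sub>R f' (0, 1)"
      unfolding linear_add[OF l] linear_scale[OF l] ..
    finally show "f' k = fst k *\<^sub>R px f q + snd k *\<^sub>R py f q"
      by (simp add: px_def py_def f'_def)
  qed
  ultimately show ?thesis by simp
qed

lemma C2_on_py_px_eq_px_py:
  assumes "open S" "p \<in> S" "C2_on S w"
  shows "py (px w) p = px (py w) p"
proof -
  have w: "C1_on S w" and wx: "C1_on S (px w)" and wy: "C1_on S (py w)"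
    using assms(3) by (auto simp: C2_on_def)
  have component: "\<phi> (py (px w) p) = \<phi> (px (py w) p)" if \<phi>: "bounded_linear \<phi>" for \<phi> :: "cab \<Rightarrow> real"
  proof -
    have D: "((\<lambda>q. \<phi> (f q)) has_derivative (\<lambda>k. fst k * \<phi> (px f q) + snd k * \<phi> (py f q))) (at q)"
      if "C1_on S f" "q \<in> S" for f q
      using bounded_linear.has_derivative[OF \<phi> C1_on_has_derivative[OF that]]
      by (simp add: linear_add[OF bounded_linear.linear[OF \<phi>]] linear_scale[OF bounded_linear.linear[OF \<phi>]])
    have "continuous_on S (py (px w))" "continuous_on S (px (py w))"
      using wx wy by (auto simp: C1_on_def)
    then show ?thesis
      using mixed_partials_eq[OF assms(1,2) D[OF w] D[OF wx] D[OF wy]]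
        bounded_linear.continuous_on[OF \<phi>] by blast
  qed
  show ?thesis
    using component[OF bounded_linear_fst] component[OF bounded_linear_snd] by (simp add: prod_eq_iff)
qed

lemma has_derivative_dz:
  assumes "C2_on S w" "p \<in> S"
  shows "(dz a b w has_derivative
      (\<lambda>k. (1/2) *\<^sub>R ((fst k *\<^sub>R px (px w) p + snd k *\<^sub>R py (px w) p)
        - cmul a b iunit (fst k *\<^sub>R px (py w) p + snd k *\<^sub>R py (py w) p)))) (at p)"
proof -
  have "C1_on S (px w)" "C1_on S (py w)"
    using assms(1) by (auto simp: C2_on_def)
  note wx = C1_on_has_derivative[OF this(1) assms(2)] and wy = C1_on_has_derivative[OF this(2) assms(2)]
  have const: "((\<lambda>q. iunit) has_derivative (\<lambda>k. 0)) (at p)" by simp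
  show ?thesis
    unfolding dz_def[abs_def]
    by (rule has_derivative_eq_rhs, (rule has_derivative_scaleR_right has_derivative_diff wx
          has_derivative_cmul[OF const wy])+) simp
qed

lemma has_derivative_dzbar:
  assumes "C2_on S w" "p \<in> S"
  shows "(dzbar a b w has_derivative
      (\<lambda>k. (1/2) *\<^sub>R ((fst k *\<^sub>R px (px w) p + snd k *\<^sub>R py (px w) p)
        + cmul a b iunit (fst k *\<^sub>R px (py w) p + snd k *\<^sub>R py (py w) p)))) (at p)"
proof -
  have "C1_on S (px w)" "C1_on S (py w)"
    using assms(1) by (auto simp: C2_on_def)
  note wx = C1_on_has_derivative[OF this(1) assms(2)] and wy = C1_on_has_derivative[OF this(2) assms(2)]
  have const: "((\<lambda>q. iunit) has_derivative (\<lambda>k. 0)) (at p)" by simp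
  show ?thesis
    unfolding dzbar_def[abs_def]
    by (rule has_derivative_eq_rhs, (rule has_derivative_scaleR_right has_derivative_add wx
          has_derivative_cmul[OF const wy])+) simp
qed

lemma dzbar_dz_commute:
  assumes "open S" "p \<in> S" "C2_on S w"
  shows "dzbar a b (dz a b w) p = dz a b (dzbar a b w) p"
  using C2_on_py_px_eq_px_py[OF assms]
  by (simp add: dzbar_has_derivative[OF has_derivative_dz[OF assms(3,2)]]
      dz_has_derivative[OF has_derivative_dzbar[OF assms(3,2)]] cmul_def iunit_def prod_eq_iff algebra_simps)

lemma dzbar_dz_eq_0:
  assumes "open S" "p \<in> S" "C2_on S w" "holomorphic_ab_on a b S w"
  shows "dzbar a b (dz a b w) p = 0"
proof -
  have "dz a b (dzbar a b w) p = dz a b (\<lambda>q. 0) p"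
    using assms by (intro dz_cong_open[of S]) (auto simp: holomorphic_ab_on_def)
  then show ?thesis
    using dzbar_dz_commute[OF assms(1-3)] by simp
qed

definition dzbar_Lop_holo ::
  "real \<Rightarrow> real \<Rightarrow> (real \<times> real \<Rightarrow> cab) \<Rightarrow> (real \<times> real \<Rightarrow> cab) \<Rightarrow> (real \<times> real \<Rightarrow> cab) \<Rightarrow>
   (real \<times> real \<Rightarrow> cab) \<Rightarrow> (real \<times> real \<Rightarrow> cab) \<Rightarrow> (real \<times> real \<Rightarrow> cab) \<Rightarrow> real \<times> real \<Rightarrow> cab" where
  "dzbar_Lop_holo a b A B E F G w p =
     cmul a b (dzbar a b A p) (dz a b w p) + cmul a b (dzbar a b B p) (cconj (dz a b w p))
   + cmul a b (B p) (dzbar a b (\<lambda>q. cconj (dz a b w q)) p)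
   + cmul a b (dzbar a b E p) (w p) + cmul a b (dzbar a b F p) (cconj (w p))
   + cmul a b (F p) (dzbar a b (\<lambda>q. cconj (w q)) p) + dzbar a b G p"

lemma dzbar_Lop_eq_dzbar_Lop_holo:
  assumes "open \<Omega>" "p \<in> \<Omega>" and w: "C2_on \<Omega> w" "holomorphic_ab_on a b \<Omega> w"
    and "A differentiable (at p)" "B differentiable (at p)" "E differentiable (at p)"
      "F differentiable (at p)" "G differentiable (at p)"
  shows "dzbar a b (Lop a b A B C D E F G w) p = dzbar_Lop_holo a b A B E F G w p"
proof -
  have dw: "w differentiable (at p)" "dz a b w differentiable (at p)"
    using w(1) assms(2) differentiableI[OF has_derivative_dz[OF w(1) assms(2)]]
    by (simp_all add: C2_on_def C1_on_def)
  have "dzbar a b (Lop a b A B C D E F G w) p = dzbar a b (\<lambda>q.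
      cmul a b (A q) (dz a b w q) + cmul a b (B q) (cconj (dz a b w q))
    + cmul a b (E q) (w q) + cmul a b (F q) (cconj (w q)) + G q) p"
    using w(2) by (intro dzbar_cong_open[OF assms(1,2)]) (simp add: Lop_def holomorphic_ab_on_def)
  also have "\<dots> = cmul a b (A p) (dzbar a b (dz a b w) p) + cmul a b (dzbar a b A p) (dz a b w p)
      + (cmul a b (B p) (dzbar a b (\<lambda>q. cconj (dz a b w q)) p) + cmul a b (dzbar a b B p) (cconj (dz a b w p)))
      + (cmul a b (E p) (dzbar a b w p) + cmul a b (dzbar a b E p) (w p))
      + (cmul a b (F p) (dzbar a b (\<lambda>q. cconj (w q)) p) + cmul a b (dzbar a b F p) (cconj (w p)))
      + dzbar a b G p"
    using assms(5-) dw by (simp add: dzbar_add dzbar_cmul differentiable_cmul differentiable_cconj)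
  moreover have "dzbar a b (dz a b w) p = 0" "dzbar a b w p = 0"
    using dzbar_dz_eq_0[OF assms(1-2) w] w(2) assms(2) by (auto simp: holomorphic_ab_on_def)
  ultimately show ?thesis
    by (simp add: dzbar_Lop_holo_def add_ac)
qed

lemma dzbar_Lop_holo_const:
  "dzbar_Lop_holo a b A B E F G (\<lambda>q. c) p
     = cmul a b (dzbar a b E p) c + cmul a b (dzbar a b F p) (cconj c) + dzbar a b G p"
  by (simp add: dzbar_Lop_holo_def)

lemma coefficient_conditions_imp_dzbar_Lop_holo_eq_0:
  assumes "open \<Omega>" "p \<in> \<Omega>" "\<forall>q\<in>\<Omega>. B q = 0" "\<forall>q\<in>\<Omega>. F q = 0"
    and "holomorphic_ab_on a b \<Omega> A" "holomorphic_ab_on a b \<Omega> E" "holomorphic_ab_on a b \<Omega> G"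
  shows "dzbar_Lop_holo a b A B E F G w p = 0"
  using assms dzbar_eq_0_if_vanishes_on_open[OF assms(1,2)]
  by (simp add: dzbar_Lop_holo_def holomorphic_ab_on_def)

lemma associated_CR_Lop_iff:
  assumes "open \<Omega>" "C1_on \<Omega> A" "C1_on \<Omega> B" "C1_on \<Omega> E" "C1_on \<Omega> F" "C1_on \<Omega> G"
  shows "associated_CR a b \<Omega> (Lop a b A B C D E F G) \<longleftrightarrow>
    (\<forall>w. C2_on \<Omega> w \<longrightarrow> holomorphic_ab_on a b \<Omega> w \<longrightarrow> (\<forall>p\<in>\<Omega>. dzbar_Lop_holo a b A B E F G w p = 0))"
proof -
  have "holomorphic_ab_on a b \<Omega> (Lop a b A B C D E F G w) \<longleftrightarrow>
      (\<forall>p\<in>\<Omega>. dzbar_Lop_holo a b A B E F G w p = 0)"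
    if "C2_on \<Omega> w" "holomorphic_ab_on a b \<Omega> w" for w
    using dzbar_Lop_eq_dzbar_Lop_holo[OF assms(1) _ that] assms(2-)
    by (auto simp: holomorphic_ab_on_def[of _ _ _ "Lop a b A B C D E F G w"] C1_on_def)
  then show ?thesis
    by (auto simp: associated_CR_def)
qed

section \<open>Quadratic test functions\<close>

definition quad :: "cab \<Rightarrow> cab \<Rightarrow> cab \<Rightarrow> cab \<Rightarrow> cab \<Rightarrow> cab \<Rightarrow> real \<times> real \<Rightarrow> cab" where
  "quad c0 c1 c2 c3 c4 c5 q = c0 + fst q *\<^sub>R c1 + snd q *\<^sub>R c2 + (fst q)\<^sup>2 *\<^sub>R c3
      + (fst q * snd q) *\<^sub>R c4 + (snd q)\<^sup>2 *\<^sub>R c5"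

lemma has_derivative_quad:
  "(quad c0 c1 c2 c3 c4 c5 has_derivative
     (\<lambda>k. fst k *\<^sub>R (c1 + (2 * fst q) *\<^sub>R c3 + snd q *\<^sub>R c4)
        + snd k *\<^sub>R (c2 + fst q *\<^sub>R c4 + (2 * snd q) *\<^sub>R c5))) (at q)"
  unfolding quad_def[abs_def]
  by (rule has_derivative_eq_rhs, (rule derivative_eq_intros refl)+) (simp add: fun_eq_iff algebra_simps)

lemma px_quad: "px (quad c0 c1 c2 c3 c4 c5) = quad c1 (2 *\<^sub>R c3) c4 0 0 0"
  by (simp add: fun_eq_iff px_py_has_derivative[OF has_derivative_quad] quad_def algebra_simps)

lemma py_quad: "py (quad c0 c1 c2 c3 c4 c5) = quad c2 c4 (2 *\<^sub>R c5) 0 0 0"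
  by (simp add: fun_eq_iff px_py_has_derivative[OF has_derivative_quad] quad_def algebra_simps)

lemma C1_on_quad: "C1_on S (quad c0 c1 c2 c3 c4 c5)"
proof -
  have "continuous_on S (quad c0 c1 c2 c3 c4 c5)" for c0 c1 c2 c3 c4 c5
    unfolding quad_def[abs_def] by (intro continuous_intros)
  then show ?thesis
    unfolding C1_on_def px_quad py_quad using has_derivative_quad differentiable_def by blast
qed

lemma C2_on_quad: "C2_on S (quad c0 c1 c2 c3 c4 c5)"
  by (simp add: C2_on_def px_quad py_quad C1_on_quad)

lemma dzbar_quad: "dzbar a b (quad c0 c1 c2 c3 c4 c5) q =
   (1/2) *\<^sub>R ((c1 + (2 * fst q) *\<^sub>R c3 + snd q *\<^sub>R c4) + cmul a b iunit (c2 + fst q *\<^sub>R c4 + (2 * snd q) *\<^sub>R c5))"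
  by (simp add: dzbar_has_derivative[OF has_derivative_quad])

lemma dz_quad: "dz a b (quad c0 c1 c2 c3 c4 c5) =
   quad ((1/2) *\<^sub>R (c1 - cmul a b iunit c2)) ((1/2) *\<^sub>R (2 *\<^sub>R c3 - cmul a b iunit c4))
        ((1/2) *\<^sub>R (c4 - cmul a b iunit (2 *\<^sub>R c5))) 0 0 0"
  by (simp add: fun_eq_iff dz_has_derivative[OF has_derivative_quad] quad_def
      cmul_add_right cmul_scaleR_right algebra_simps)

lemma cconj_quad: "(\<lambda>q. cconj (quad c0 c1 c2 c3 c4 c5 q)) =
   quad (cconj c0) (cconj c1) (cconj c2) (cconj c3) (cconj c4) (cconj c5)"
  by (simp add: fun_eq_iff quad_def cconj_def)

lemmas quad_simps = dzbar_quad dz_quad cconj_quad quad_def cmul_def iunit_def cconj_def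
  prod_eq_iff algebra_simps power2_eq_square

text \<open>The three test functions below are \<open>\<zeta>\<close>, \<open>i\<zeta>\<close> and \<open>\<zeta>\<^sup>2\<close>
  for the holomorphic coordinate \<open>\<zeta> = y - ix\<close>.\<close>

lemma quad_zeta:
  fixes x y :: real
  shows "holomorphic_ab_on a b S (quad 0 (0, -1) (1, 0) 0 0 0)"
    "dz a b (quad 0 (0, -1) (1, 0) 0 0 0) (x, y) = (0, -1)"
    "dzbar a b (\<lambda>q. cconj (dz a b (quad 0 (0, -1) (1, 0) 0 0 0) q)) (x, y) = 0"
    "dzbar a b (\<lambda>q. cconj (quad 0 (0, -1) (1, 0) 0 0 0 q)) (x, y) = (0, 1)"
  unfolding holomorphic_ab_on_def dz_quad cconj_quad dzbar_quad by (simp_all add: quad_simps)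

lemma quad_i_zeta:
  fixes x y :: real
  shows "holomorphic_ab_on a b S (quad 0 (a, b) (0, 1) 0 0 0)"
    "dz a b (quad 0 (a, b) (0, 1) 0 0 0) (x, y) = (a, b)"
    "dzbar a b (\<lambda>q. cconj (dz a b (quad 0 (a, b) (0, 1) 0 0 0) q)) (x, y) = 0"
    "dzbar a b (\<lambda>q. cconj (quad 0 (a, b) (0, 1) 0 0 0 q)) (x, y) = (a, 0)"
  unfolding holomorphic_ab_on_def dz_quad cconj_quad dzbar_quad by (simp_all add: quad_simps)

lemma quad_zeta_squared:
  fixes x y :: real
  shows "holomorphic_ab_on a b S (quad 0 0 0 (-a, -b) (0, -2) (1, 0))"
    "dz a b (quad 0 0 0 (-a, -b) (0, -2) (1, 0)) (x, y) = (-2*a*x, -2*y - 2*b*x)"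
    "dzbar a b (\<lambda>q. cconj (dz a b (quad 0 0 0 (-a, -b) (0, -2) (1, 0)) q)) (x, y) = (-2*a, 0)"
    "dzbar a b (\<lambda>q. cconj (quad 0 0 0 (-a, -b) (0, -2) (1, 0) q)) (x, y) = (-2*a*x, 2*y)"
  unfolding holomorphic_ab_on_def dz_quad cconj_quad dzbar_quad by (simp_all add: quad_simps)

section \<open>Necessity of the conditions\<close>

lemma tests_imp_dzbar_E_F_G_eq_0_and_B_eq_0:
  assumes "a \<noteq> 0"
    and tests: "\<And>w. C2_on \<Omega> w \<Longrightarrow> holomorphic_ab_on a b \<Omega> w \<Longrightarrow> dzbar_Lop_holo a b A B E F G w p = 0"
  shows "dzbar a b E p = 0 \<and> dzbar a b F p = 0 \<and> dzbar a b G p = 0 \<and> B p = 0"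
proof -
  have const: "cmul a b (dzbar a b E p) c + cmul a b (dzbar a b F p) (cconj c) + dzbar a b G p = 0" for c
    using tests[OF C2_on_const] by (simp add: holomorphic_ab_on_def dzbar_Lop_holo_const)
  then have G: "dzbar a b G p = 0"
    using const[of 0] by simp
  obtain e1 e2 f1 f2 where ef: "dzbar a b E p = (e1, e2)" "dzbar a b F p = (f1, f2)"
    by fastforce
  have "e1 + f1 = 0" "e2 + f2 = 0" "a * (f2 - e2) = 0" "e1 - b * e2 - f1 + b * f2 = 0"
    using const[of "(1, 0)"] const[of "(0, 1)"] G
    by (simp_all add: ef cmul_def prod_eq_iff algebra_simps)
  then have EF: "dzbar a b E p = 0" "dzbar a b F p = 0"
    using \<open>a \<noteq> 0\<close> by (auto simp: ef zero_prod_def)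
  obtain x y where p: "p = (x, y)" by fastforce
  let ?dA = "dzbar a b A p" and ?dB = "dzbar a b B p"
  have zeta: "cmul a b ?dA (0, -1) + cmul a b ?dB (0, 1) + cmul a b (F p) (0, 1) = 0"
    using tests[OF C2_on_quad quad_zeta(1)] EF G by (simp add: dzbar_Lop_holo_def p quad_zeta)
  have i_zeta: "cmul a b ?dA (a, b) + cmul a b ?dB (a, -b) + cmul a b (F p) (a, 0) = 0"
    using tests[OF C2_on_quad quad_i_zeta(1)] EF G by (simp add: dzbar_Lop_holo_def p quad_i_zeta)
  have zeta_squared: "cmul a b ?dA (-2*a*x, -2*y - 2*b*x) + cmul a b ?dB (-2*a*x, 2*b*x + 2*y)
      + cmul a b (B p) (-2*a, 0) + cmul a b (F p) (-2*a*x, 2*y) = 0"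
    using tests[OF C2_on_quad quad_zeta_squared(1)] EF G
    by (simp add: dzbar_Lop_holo_def p quad_zeta_squared)
  text \<open>The equation for \<open>\<zeta>\<^sup>2\<close> is \<open>2y\<close> times that for \<open>\<zeta>\<close>, minus \<open>2x\<close> times that
    for \<open>i\<zeta>\<close>, plus the term carrying \<open>B\<close>.\<close>
  have "cmul a b (B p) (-2*a, 0)
      = (cmul a b ?dA (-2*a*x, -2*y - 2*b*x) + cmul a b ?dB (-2*a*x, 2*b*x + 2*y)
          + cmul a b (B p) (-2*a, 0) + cmul a b (F p) (-2*a*x, 2*y))
        - (2*y) *\<^sub>R (cmul a b ?dA (0, -1) + cmul a b ?dB (0, 1) + cmul a b (F p) (0, 1))
        + (2*x) *\<^sub>R (cmul a b ?dA (a, b) + cmul a b ?dB (a, -b) + cmul a b (F p) (a, 0))"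
    by (simp add: cmul_def prod_eq_iff algebra_simps)
  then have "cmul a b (B p) (-2*a, 0) = 0"
    unfolding zeta i_zeta zeta_squared by simp
  moreover have "cnorm a b (-2*a, 0) \<noteq> 0"
    using \<open>a \<noteq> 0\<close> by (simp add: cnorm_def)
  ultimately show ?thesis
    using EF G cmul_eq_0_iff_left by blast
qed

lemma tests_imp_dzbar_A_eq_0_and_F_eq_0:
  assumes "a * b\<^sup>2 - 4 * a\<^sup>2 \<noteq> 0"
    and tests: "\<And>w. C2_on \<Omega> w \<Longrightarrow> holomorphic_ab_on a b \<Omega> w \<Longrightarrow> dzbar_Lop_holo a b A B E F G w p = 0"
    and "dzbar a b B p = 0" "dzbar a b E p = 0" "dzbar a b F p = 0" "dzbar a b G p = 0"
  shows "dzbar a b A p = 0 \<and> F p = 0"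
proof -
  obtain x y where p: "p = (x, y)" by fastforce
  let ?dA = "dzbar a b A p"
  have zeta: "cmul a b ?dA (0, -1) + cmul a b (F p) (0, 1) = 0"
    using tests[OF C2_on_quad quad_zeta(1)] assms(3-)
    by (simp add: dzbar_Lop_holo_def p quad_zeta)
  have i_zeta: "cmul a b ?dA (a, b) + cmul a b (F p) (a, 0) = 0"
    using tests[OF C2_on_quad quad_i_zeta(1)] assms(3-)
    by (simp add: dzbar_Lop_holo_def p quad_i_zeta)
  have "a \<noteq> 0"
    using assms(1) by auto
  have "cmul a b (F p - ?dA) (0, 1) = 0"
    using zeta by (simp add: cmul_def prod_eq_iff algebra_simps)
  then have F: "F p = ?dA"
    using cmul_eq_0_iff_left[of a b "(0, 1)"] \<open>a \<noteq> 0\<close> by (simp add: cnorm_def)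
  have "cmul a b ?dA (2 * a, b) = 0"
    using i_zeta unfolding F by (simp add: cmul_def prod_eq_iff algebra_simps)
  moreover have "cnorm a b (2 * a, b) \<noteq> 0"
    using assms(1) by (simp add: cnorm_def power2_eq_square algebra_simps)
  ultimately show ?thesis
    using F cmul_eq_0_iff_left by auto
qed

lemma tests_imp_coefficient_conditions:
  assumes "a * b\<^sup>2 - 4 * a\<^sup>2 \<noteq> 0" "open \<Omega>"
    and tests: "\<And>w p. C2_on \<Omega> w \<Longrightarrow> holomorphic_ab_on a b \<Omega> w \<Longrightarrow> p \<in> \<Omega> \<Longrightarrow>
      dzbar_Lop_holo a b A B E F G w p = 0"
  shows "(\<forall>p\<in>\<Omega>. B p = 0) \<and> (\<forall>p\<in>\<Omega>. F p = 0) \<and>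
    holomorphic_ab_on a b \<Omega> A \<and> holomorphic_ab_on a b \<Omega> E \<and> holomorphic_ab_on a b \<Omega> G"
proof -
  have "a \<noteq> 0" using assms(1) by auto
  note EFGB = tests_imp_dzbar_E_F_G_eq_0_and_B_eq_0[OF \<open>a \<noteq> 0\<close> tests]
  have "dzbar a b A p = 0 \<and> F p = 0" if "p \<in> \<Omega>" for p
    using EFGB[OF _ _ that] dzbar_eq_0_if_vanishes_on_open[OF assms(2) that] EFGB
    by (intro tests_imp_dzbar_A_eq_0_and_F_eq_0[OF assms(1) tests[OF _ _ that]]) auto
  then show ?thesis
    using EFGB by (simp add: holomorphic_ab_on_def)
qed

theorem lemma1:
  fixes \<alpha> \<beta> :: real and \<Omega> :: "(real \<times> real) set"
    and A B C D E F G :: "real \<times> real \<Rightarrow> real \<times> real"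
  assumes "\<alpha> * \<beta>^2 - 4 * \<alpha>^2 \<noteq> 0"
    and "open \<Omega>" and "connected \<Omega>"
    and "C1_on \<Omega> A" and "C1_on \<Omega> B" and "C1_on \<Omega> E" and "C1_on \<Omega> F" and "C1_on \<Omega> G"
  shows "associated_CR \<alpha> \<beta> \<Omega> (Lop \<alpha> \<beta> A B C D E F G) \<longleftrightarrow>
    ((\<forall>p\<in>\<Omega>. B p = 0) \<and> (\<forall>p\<in>\<Omega>. F p = 0) \<and>
     holomorphic_ab_on \<alpha> \<beta> \<Omega> A \<and> holomorphic_ab_on \<alpha> \<beta> \<Omega> E \<and> holomorphic_ab_on \<alpha> \<beta> \<Omega> G)"
proof
  assume "associated_CR \<alpha> \<beta> \<Omega> (Lop \<alpha> \<beta> A B C D E F G)"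
  then show "(\<forall>p\<in>\<Omega>. B p = 0) \<and> (\<forall>p\<in>\<Omega>. F p = 0) \<and> holomorphic_ab_on \<alpha> \<beta> \<Omega> A
      \<and> holomorphic_ab_on \<alpha> \<beta> \<Omega> E \<and> holomorphic_ab_on \<alpha> \<beta> \<Omega> G"
    using tests_imp_coefficient_conditions[OF assms(1,2)]
    unfolding associated_CR_Lop_iff[OF assms(2,4-8)] by blast
next
  assume "(\<forall>p\<in>\<Omega>. B p = 0) \<and> (\<forall>p\<in>\<Omega>. F p = 0) \<and> holomorphic_ab_on \<alpha> \<beta> \<Omega> A
      \<and> holomorphic_ab_on \<alpha> \<beta> \<Omega> E \<and> holomorphic_ab_on \<alpha> \<beta> \<Omega> G"
  then show "associated_CR \<alpha> \<beta> \<Omega> (Lop \<alpha> \<beta> A B C D E F G)"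
    using coefficient_conditions_imp_dzbar_Lop_holo_eq_0[OF assms(2)]
    unfolding associated_CR_Lop_iff[OF assms(2,4-8)] by blast
qed

end
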